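(* Consider the network model with social-oblivious mobility and FirstMeeting (FM) routing described in the context, and let $T^{so}_{FM}$ be the time at which the message is first delivered to $D$. Then $\mathbb{E}[T^{so}_{FM}]=\frac{1}{2\lambda}(1+o(1))$ as $n\to\infty$.
   Context: Network: $n+2$ nodes, a source $S$, a destination $D$ and relays $R_1,\dots,R_n$. For each unordered pair $\{A,B\}$ of nodes the meeting instants form a Poisson process of rate $\lambda_{AB}$, independently over pairs, starting at time $0$. Social-oblivious mobility: $\lambda_{AB}=\lambda$ for all pairs, a fixed constant $\lambda>0$. FM routing: $S$ holds two copies of a message for $D$ and always keeps one. If the first node met by $S$ among $\{D,R_1,\dots,R_n\}$ is $D$, the message is delivered then; otherwise the second copy is given to that first relay $R_j$, no further copies are created or transferred, and the message is delivered when the first of $S,R_j$ meets $D$. *)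

theory Defs
  imports "HOL-Probability.Probability" "HOL-Library.Landau_Symbols"
begin

text \<open>Nodes are natural numbers: node 0 is the source S, node 1 the destination D,
  and node (j+1) is relay R_j for j = 1..n.  The meetings of the unordered pair {a,b}
  form a Poisson process of rate lam, encoded by i.i.d. Exp(lam) inter-meeting times
  w (min a b, max a b, i), i = 0,1,2,...\<close>

definition meeting_space :: "real \<Rightarrow> (nat \<times> nat \<times> nat \<Rightarrow> real) measure" where
  "meeting_space lam = PiM UNIV (\<lambda>_. density lborel (exponential_density lam))"

text \<open>Time of the k-th meeting (k = 0 is the first) of nodes a and b.\<close>
definition meet :: "nat \<Rightarrow> nat \<Rightarrow> nat \<Rightarrow> (nat \<times> nat \<times> nat \<Rightarrow> real) \<Rightarrow> real" where
  "meet a b k w = (\<Sum>i\<le>k. w (min a b, max a b, i))"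

definition first_after :: "nat \<Rightarrow> nat \<Rightarrow> real \<Rightarrow> (nat \<times> nat \<times> nat \<Rightarrow> real) \<Rightarrow> real" where
  "first_after a b t w = (INF k \<in> {k. t < meet a b k w}. meet a b k w)"

definition first_contact :: "nat \<Rightarrow> (nat \<times> nat \<times> nat \<Rightarrow> real) \<Rightarrow> nat" where
  "first_contact n w = (ARG_MIN (\<lambda>j. meet 0 j 0 w) j. j \<in> {1..n+1})"

definition T_FM :: "nat \<Rightarrow> (nat \<times> nat \<times> nat \<Rightarrow> real) \<Rightarrow> real" where
  "T_FM n w = (let j = first_contact n w; t = meet 0 j 0 w in
     if j = 1 then t else min (first_after 0 1 t w) (first_after j 1 t w))"

end

theory Submission
  imports Defs "HOL-Real_Asymp.Real_Asymp"
begin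

text \<open>Let \<open>U\<close> be the first meeting of S and D and \<open>X \<le> U\<close> the first time S meets D or a
  relay; \<open>X\<close> is exponential with rate \<open>(n+1)\<lambda>\<close>, so \<open>E X \<rightarrow> 0\<close>.  If S first meets the relay
  \<open>R\<^sub>j\<close> and the first meeting \<open>V\<^sub>j\<close> of \<open>R\<^sub>j\<close> and D comes after \<open>X\<close>, the message is delivered
  at \<open>min U V\<^sub>j\<close>.  Since \<open>j\<close> is chosen by the meetings of S alone, \<open>V\<^sub>j\<close> can be replaced by
  an independent exponential variable \<open>V\<close>, and \<open>min U V\<close> is exponential with rate \<open>2\<lambda>\<close>, of
  mean \<open>1/(2\<lambda>)\<close>.  On the remaining event \<open>V\<^sub>j \<le> X\<close> the delivery time lies in \<open>[0, U]\<close>, or is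
  the junk value \<open>Inf {}\<close> if \<open>R\<^sub>j\<close> never meets D after \<open>X\<close>; this event has probability at most
  \<open>P(V \<le> e) + E X / e\<close>, and the weight \<open>U\<close> on it is handled by \<open>U \<le> U\<^sup>2/K + K\<close>.  With
  \<open>K = n\<^bsup>1/4\<^esup>\<close> and \<open>e = n\<^bsup>-1/2\<^esup>\<close> all error terms vanish.\<close>

lemma measurable_fun_upd_PiM_UNIV:
  "(\<lambda>(x, w). w(c := x)) \<in> measurable (M \<Otimes>\<^sub>M PiM UNIV (\<lambda>_. M)) (PiM UNIV (\<lambda>_. M))"
proof (rule measurable_PiM_single')
  fix i
  have "(\<lambda>y. (case y of (x, w) \<Rightarrow> w(c := x)) i) = (\<lambda>y. if i = c then fst y else snd y i)"
    by (auto simp: fun_eq_iff)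
  also have "\<dots> \<in> measurable (M \<Otimes>\<^sub>M PiM UNIV (\<lambda>_. M)) M"
    by (cases "i = c") (auto intro: measurable_compose[OF measurable_snd measurable_component_singleton])
  finally show "(\<lambda>y. (case y of (x, w) \<Rightarrow> w(c := x)) i) \<in> measurable (M \<Otimes>\<^sub>M PiM UNIV (\<lambda>_. M)) M" .
qed (auto simp: space_pair_measure space_PiM)

lemma (in prob_space) nn_integral_PiM_UNIV_resample:
  fixes h :: "('i \<Rightarrow> 'a) \<Rightarrow> 'a \<Rightarrow> ennreal"
  defines "Q \<equiv> PiM UNIV (\<lambda>_. M)"
  assumes h: "(\<lambda>(x, w). h w x) \<in> borel_measurable (M \<Otimes>\<^sub>M Q)"
    and h_indep: "\<And>w x y. h (w(c := y)) x = h w x"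
  shows "(\<integral>\<^sup>+w. h w (w c) \<partial>Q) = (\<integral>\<^sup>+w. \<integral>\<^sup>+x. h w x \<partial>M \<partial>Q)"
proof -
  have M: "prob_space M"
    by unfold_locales
  interpret Q: prob_space Q
    unfolding Q_def by (intro prob_space_PiM M)
  interpret pair_prob_space M Q ..
  have upd: "(\<lambda>(x, w). w(c := x)) \<in> measurable (M \<Otimes>\<^sub>M Q) Q"
    unfolding Q_def by (rule measurable_fun_upd_PiM_UNIV)
  have distr_upd: "distr (M \<Otimes>\<^sub>M Q) Q (\<lambda>(x, w). w(c := x)) = Q"
    using distr_pair_PiM_eq_PiM[of UNIV "\<lambda>_. M" c] M by (simp add: Q_def)
  have "(\<lambda>w. (w c, w)) \<in> measurable Q (M \<Otimes>\<^sub>M Q)"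
    unfolding Q_def by measurable
  from measurable_compose[OF this h] have h_diag: "(\<lambda>w. h w (w c)) \<in> borel_measurable Q"
    by simp
  have "(\<integral>\<^sup>+w. h w (w c) \<partial>Q) = (\<integral>\<^sup>+w. h w (w c) \<partial>distr (M \<Otimes>\<^sub>M Q) Q (\<lambda>(x, w). w(c := x)))"
    by (simp add: distr_upd)
  also have "\<dots> = (\<integral>\<^sup>+(x, w). h (w(c := x)) x \<partial>(M \<Otimes>\<^sub>M Q))"
    by (subst nn_integral_distr[OF upd]) (auto simp: distr_upd h_diag split_beta')
  also have "\<dots> = (\<integral>\<^sup>+(x, w). h w x \<partial>(M \<Otimes>\<^sub>M Q))"
    by (simp add: h_indep)
  also have "\<dots> = (\<integral>\<^sup>+w. \<integral>\<^sup>+x. h w x \<partial>M \<partial>Q)"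
    using nn_integral_snd[OF h] by simp
  finally show ?thesis .
qed

lemma measurable_arg_min_on:
  fixes f :: "'i \<Rightarrow> 'a \<Rightarrow> real"
  assumes S: "finite S" and [measurable]: "\<And>j. j \<in> S \<Longrightarrow> f j \<in> borel_measurable M"
  shows "(\<lambda>w. arg_min_on (\<lambda>j. f j w) S) \<in> measurable M (count_space UNIV)"
proof -
  define A where "A w = {y \<in> S. f y w = Min ((\<lambda>j. f j w) ` S)}" for w
  have "A -` {B} \<inter> space M \<in> sets M" if "B \<subseteq> S" for B
  proof -
    have "A w = B \<longleftrightarrow> (\<forall>y\<in>S. y \<in> B \<longleftrightarrow> f y w = Min ((\<lambda>j. f j w) ` S))" for w
      using that unfolding A_def by blast
    then have "A -` {B} \<inter> space M = {w \<in> space M. \<forall>y\<in>S. y \<in> B \<longleftrightarrow> f y w = Min ((\<lambda>j. f j w) ` S)}"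
      by blast
    also have "\<dots> \<in> sets M"
      using S by measurable
    finally show ?thesis .
  qed
  then have "A \<in> measurable M (count_space (Pow S))"
    using S by (subst measurable_count_space_eq2) (auto simp: A_def)
  moreover have "(\<lambda>w. arg_min_on (\<lambda>j. f j w) S) = (\<lambda>B. SOME y. y \<in> B) \<circ> A"
    using S by (simp add: fun_eq_iff A_def arg_min_SOME_Min)
  ultimately show ?thesis
    by (simp only: measurable_comp[OF _ measurable_count_space])
qed

lemma Inf_after_less_iff:
  fixes m :: "'i \<Rightarrow> 'a::conditionally_complete_linorder"
  shows "(INF k\<in>{k. t < m k}. m k) < y \<longleftrightarrow> (\<forall>k. m k \<le> t) \<and> Inf {} < y \<or> (\<exists>k. t < m k \<and> m k < y)"
proof (cases "\<forall>k. m k \<le> t")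
  case True
  then have "{k. t < m k} = {}"
    by (auto simp: not_less)
  with True show ?thesis
    by (auto dest: leD)
next
  case False
  have "bdd_below (m ` {k. t < m k})"
    by (rule bdd_belowI[of _ t]) auto
  with False show ?thesis
    by (auto simp: cInf_less_iff not_le) (meson leD)
qed

lemma borel_measurable_Inf_after:
  fixes m :: "'i::countable \<Rightarrow> 'a \<Rightarrow> real"
  assumes [measurable]: "\<And>k. m k \<in> borel_measurable M" "t \<in> borel_measurable M"
  shows "(\<lambda>w. INF k\<in>{k. t w < m k w}. m k w) \<in> borel_measurable M"
  by (rule borel_measurableI_less) (unfold Inf_after_less_iff, measurable)

lemma le_square_div_add:
  fixes u K :: real
  assumes "0 < K" "0 \<le> u"
  shows "u \<le> u\<^sup>2 / K + K"
proof (cases "u \<le> K")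
  case False
  then have "u * K \<le> u * u"
    using assms by (intro mult_left_mono) auto
  then have "u \<le> u\<^sup>2 / K"
    using assms by (simp add: field_simps power2_eq_square)
  then show ?thesis
    using assms by linarith
qed (use assms in \<open>simp add: add_increasing\<close>)

type_synonym meetings = "nat \<times> nat \<times> nat \<Rightarrow> real"

definition first_contact_time :: "nat \<Rightarrow> meetings \<Rightarrow> real" where
  "first_contact_time n w = Min ((\<lambda>j. w (0, j, 0)) ` {1..n+1})"

text \<open>\<open>w (1, j, 0)\<close> is the first meeting of the relay \<open>j\<close> with D.\<close>

definition relay_term :: "nat \<Rightarrow> (meetings \<Rightarrow> real \<Rightarrow> real) \<Rightarrow> meetings \<Rightarrow> real" where
  "relay_term n g w = (let j = first_contact n w in if j = 1 then 0 else g w (w (1, j, 0)))"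

definition regular_meetings :: "nat \<Rightarrow> meetings \<Rightarrow> bool" where
  "regular_meetings n w \<longleftrightarrow> (\<forall>c. 0 \<le> w c) \<and> (\<forall>j\<in>{2..n+1}. w (0, j, 0) \<noteq> w (0, 1, 0))"

lemma meet_source_first [simp]: "meet 0 j 0 w = w (0, j, 0)"
  by (simp add: meet_def)

lemma first_contact_eq_arg_min_on:
  "first_contact n w = arg_min_on (\<lambda>j. w (0, j, 0)) {1..n+1}"
  by (simp add: first_contact_def arg_min_on_def)

lemma first_contact_mem: "first_contact n w \<in> {1..n+1}"
  unfolding first_contact_eq_arg_min_on by (rule arg_min_if_finite(1)) auto

lemma first_contact_time_eq: "w (0, first_contact n w, 0) = first_contact_time n w"
  unfolding first_contact_time_def
proof (rule Min_eqI[symmetric])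
  show "w (0, first_contact n w, 0) \<in> (\<lambda>j. w (0, j, 0)) ` {1..n+1}"
    using first_contact_mem by blast
  show "w (0, first_contact n w, 0) \<le> y" if "y \<in> (\<lambda>j. w (0, j, 0)) ` {1..n+1}" for y
    using that by (auto simp: first_contact_eq_arg_min_on intro: arg_min_least)
qed simp

lemma first_contact_time_le: "j \<in> {1..n+1} \<Longrightarrow> first_contact_time n w \<le> w (0, j, 0)"
  unfolding first_contact_time_def by (rule Min_le) auto

lemma first_contact_fun_upd:
  "fst c = 1 \<Longrightarrow> first_contact n (w(c := y)) = first_contact n w"
  unfolding first_contact_eq_arg_min_on
  by (cases c) (auto intro!: arg_cong[where f = "\<lambda>f. arg_min_on f _"] simp: fun_eq_iff)

lemma first_after_eq_first_meeting:
  assumes "\<forall>i. 0 \<le> w (min a b, max a b, i)" and "t < w (min a b, max a b, 0)"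
  shows "first_after a b t w = w (min a b, max a b, 0)"
  unfolding first_after_def
proof (rule cInf_eq_minimum)
  show "w (min a b, max a b, 0) \<in> (\<lambda>k. meet a b k w) ` {k. t < meet a b k w}"
    using assms(2) by (intro image_eqI[of _ _ 0]) (auto simp: meet_def)
  show "w (min a b, max a b, 0) \<le> x" if "x \<in> (\<lambda>k. meet a b k w) ` {k. t < meet a b k w}" for x
    using that assms(1) by (auto simp: meet_def intro!: member_le_sum)
qed

lemma first_after_ge: "min t (Inf {}) \<le> first_after a b t w"
proof (cases "{k. t < meet a b k w} = {}")
  case False
  have "t \<le> first_after a b t w"
    unfolding first_after_def by (rule cINF_greatest[OF False]) auto
  then show ?thesis
    by simp
qed (simp add: first_after_def)

lemma T_FM_direct:
  "first_contact n w = 1 \<Longrightarrow> T_FM n w = w (0, 1, 0) \<and> first_contact_time n w = w (0, 1, 0)"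
  using first_contact_time_eq[of w n] by (simp add: T_FM_def Let_def)

lemma T_FM_relay:
  assumes w: "regular_meetings n w" and j: "first_contact n w = j" "j \<noteq> 1"
  shows "j \<in> {2..n+1}"
    and "T_FM n w = min (w (0, 1, 0)) (first_after j 1 (first_contact_time n w) w)"
proof -
  show j2: "j \<in> {2..n+1}"
    using first_contact_mem[of n w] j by auto
  have "first_contact_time n w \<noteq> w (0, 1, 0)"
    using w j2 first_contact_time_eq[of w n] j unfolding regular_meetings_def by auto
  then have "first_contact_time n w < w (0, 1, 0)"
    using first_contact_time_le[of 1 n w] by simp
  then have "first_after 0 1 (first_contact_time n w) w = w (0, 1, 0)"
    using first_after_eq_first_meeting[of w 0 1] w unfolding regular_meetings_def by auto
  then show "T_FM n w = min (w (0, 1, 0)) (first_after j 1 (first_contact_time n w) w)"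
    using j first_contact_time_eq[of w n] by (simp add: T_FM_def Let_def)
qed

lemma regular_meetings_nonneg: "regular_meetings n w \<Longrightarrow> 0 \<le> w c"
  unfolding regular_meetings_def by (cases c) auto

lemma first_contact_time_nonneg: "regular_meetings n w \<Longrightarrow> 0 \<le> first_contact_time n w"
  by (metis first_contact_time_eq regular_meetings_nonneg)

lemma T_FM_relay_eq_min:
  assumes w: "regular_meetings n w" and j: "first_contact n w = j" "j \<noteq> 1"
    and "first_contact_time n w < w (1, j, 0)"
  shows "T_FM n w = min (w (0, 1, 0)) (w (1, j, 0))"
  using T_FM_relay[OF w j] first_after_eq_first_meeting[of w j 1] regular_meetings_nonneg[OF w] assms(4)
  by simp

lemma T_FM_bounds:
  assumes w: "regular_meetings n w"
  shows "- \<bar>Inf {}\<bar> \<le> T_FM n w \<and> T_FM n w \<le> w (0, 1, 0)"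
proof (cases "first_contact n w = 1")
  case True
  then show ?thesis
    using T_FM_direct[OF True] regular_meetings_nonneg[OF w, of "(0, 1, 0)"] by auto
next
  case False
  have "min (first_contact_time n w) (Inf {}) \<le> first_after (first_contact n w) 1 (first_contact_time n w) w"
    by (rule first_after_ge)
  then show ?thesis
    using T_FM_relay(2)[OF w refl False] first_contact_time_nonneg[OF w]
      regular_meetings_nonneg[OF w, of "(0, 1, 0)"]
    by auto
qed

lemma relay_term_eq_sum:
  "relay_term n g w = (\<Sum>j\<in>{2..n+1}. if first_contact n w = j then g w (w (1, j, 0)) else 0)"
  using first_contact_mem[of n w] by (auto simp: relay_term_def Let_def sum.delta')

lemma abs_T_FM_minus_relay_term_le:
  fixes K e :: real
  assumes w: "regular_meetings n w" and K: "0 < K" and e: "0 < e"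
  shows "\<bar>T_FM n w - relay_term n (\<lambda>w x. max 0 (min (w (0, 1, 0)) x)) w\<bar>
    \<le> first_contact_time n w + (w (0, 1, 0))\<^sup>2 / K
       + (K + \<bar>Inf {}\<bar>) * (relay_term n (\<lambda>_. indicator {..e}) w + first_contact_time n w / e)"
    (is "\<bar>T_FM n w - ?R\<bar> \<le> ?X + ?U\<^sup>2 / K + ?C * (?I + ?X / e)")
proof -
  note nonneg = regular_meetings_nonneg[OF w] and X_nonneg = first_contact_time_nonneg[OF w]
  have err_nonneg: "0 \<le> ?C * (?I + ?X / e)"
    using X_nonneg K e by (simp add: relay_term_def Let_def)
  show ?thesis
  proof (cases "first_contact n w = 1")
    case True
    then show ?thesis
      using T_FM_direct[OF True] err_nonneg K nonneg[of "(0, 1, 0)"] by (simp add: relay_term_def)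
  next
    case False
    define j where "j = first_contact n w"
    define V where "V = w (1, j, 0)"
    have R: "?R = min ?U V" "?I = indicator {..e} V"
      using False nonneg by (simp_all add: relay_term_def Let_def j_def[symmetric] V_def)
    show ?thesis
    proof (cases "?X < V")
      case True
      then show ?thesis
        using T_FM_relay_eq_min[OF w j_def[symmetric] False[folded j_def]] R err_nonneg X_nonneg K
        by (simp add: V_def)
    next
      case False
      have "\<bar>T_FM n w - ?R\<bar> \<le> ?U + \<bar>Inf {}\<bar>"
        using T_FM_bounds[OF w] R nonneg[of "(0, 1, 0)"] nonneg[of "(1, j, 0)"] by (auto simp: V_def)
      also have "\<dots> \<le> ?U\<^sup>2 / K + ?C * 1"
        using le_square_div_add[OF K nonneg[of "(0, 1, 0)"]] by simp
      also have "\<dots> \<le> ?U\<^sup>2 / K + ?C * (?I + ?X / e)"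
      proof -
        have "1 \<le> indicator {..e} V + ?X / e"
          using False X_nonneg e by (cases "V \<le> e") (auto simp: field_simps)
        then show ?thesis
          using K R by (intro add_left_mono mult_left_mono) auto
      qed
      finally show ?thesis
        using X_nonneg by linarith
    qed
  qed
qed

locale exponential_meetings =
  fixes lam :: real
  assumes lam_pos: "0 < lam"
begin

abbreviation exp_law :: "real measure" where
  "exp_law \<equiv> density lborel (exponential_density lam)"

abbreviation P :: "meetings measure" where
  "P \<equiv> meeting_space lam"

lemma prob_space_exp_law: "prob_space exp_law"
  using lam_pos by (rule prob_space_exponential_density)

lemma meeting_space_eq: "P = PiM UNIV (\<lambda>_. exp_law)"
  by (simp add: meeting_space_def)

sublocale P: prob_space P
  unfolding meeting_space_eq by (intro prob_space_PiM prob_space_exp_law)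

lemma space_P [simp]: "space P = UNIV"
  by (simp add: meeting_space_eq space_PiM)

lemma measurable_P_eq: "measurable P N = measurable (PiM UNIV (\<lambda>_. borel)) N"
  unfolding meeting_space_eq by (intro measurable_cong_sets sets_PiM_cong) auto

lemma measurable_exp_law_P_eq:
  "measurable (exp_law \<Otimes>\<^sub>M P) N = measurable (borel \<Otimes>\<^sub>M PiM UNIV (\<lambda>_. borel)) N"
  unfolding meeting_space_eq by (intro measurable_cong_sets sets_pair_measure_cong sets_PiM_cong) auto

lemma borel_measurable_coordinate [measurable]: "(\<lambda>w. w c) \<in> borel_measurable P"
  unfolding measurable_P_eq by measurable

lemma nn_integral_resample:
  assumes "(\<lambda>(x, w). h w x) \<in> borel_measurable (exp_law \<Otimes>\<^sub>M P)"
    and "\<And>w x y. h (w(c := y)) x = h w x"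
  shows "(\<integral>\<^sup>+w. h w (w c) \<partial>P) = (\<integral>\<^sup>+w. \<integral>\<^sup>+x. h w x \<partial>exp_law \<partial>P)"
  using prob_space.nn_integral_PiM_UNIV_resample[OF prob_space_exp_law, of h c] assms
  unfolding meeting_space_eq by blast

lemma distributed_coordinate: "distributed P lborel (\<lambda>w. w c) (exponential_density lam)"
proof -
  have "distr P lborel (\<lambda>w. w c) = distr P exp_law (\<lambda>w. w c)"
    by (rule distr_cong) simp_all
  also have "\<dots> = exp_law"
    unfolding meeting_space_eq by (rule distr_PiM_component) (auto intro: prob_space_exp_law)
  finally show ?thesis
    unfolding distributed_def by simp
qed

lemma indep_coordinates: "I \<noteq> {} \<Longrightarrow> P.indep_vars (\<lambda>_. borel) (\<lambda>c w. w c) I"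
proof (subst P.indep_vars_iff_distr_eq_PiM)
  have distr_coordinate: "distr P borel (\<lambda>w. w c) = exp_law" for c
    using distributed_coordinate[of c] unfolding distributed_def
    by (metis (no_types, lifting) distr_cong sets_lborel)
  have "distr P (PiM I (\<lambda>_. borel)) (\<lambda>w. \<lambda>i\<in>I. w i) = distr P (PiM I (\<lambda>_. exp_law)) (\<lambda>w. \<lambda>i\<in>I. w i)"
    by (intro distr_cong sets_PiM_cong) auto
  also have "\<dots> = PiM I (\<lambda>_. exp_law)"
    unfolding meeting_space_eq
    by (rule distr_PiM_reindex[where f = "\<lambda>x. x" and K = UNIV, simplified id_def[symmetric]])
       (auto intro: prob_space_exp_law)
  finally show "distr P (PiM I (\<lambda>_. borel)) (\<lambda>w. \<lambda>i\<in>I. w i) = PiM I (\<lambda>i. distr P borel (\<lambda>w. w i))"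
    unfolding distr_coordinate .
qed auto

lemma distributed_Min_coordinates:
  assumes "finite C" "C \<noteq> {}"
  shows "distributed P lborel (\<lambda>w. Min ((\<lambda>c. w c) ` C)) (exponential_density (real (card C) * lam))"
  using P.exponential_distributed_Min[OF assms lam_pos distributed_coordinate indep_coordinates[OF assms(2)]]
  by simp

lemma exponential_moment:
  assumes "distributed P lborel Y (exponential_density l)" "0 < l"
  shows "integrable P (\<lambda>w. Y w ^ i)" and "P.expectation (\<lambda>w. Y w ^ i) = fact i / l ^ i"
  using P.erlang_ith_moment_integrable[OF assms(2,1)] P.erlang_ith_moment[OF assms(2,1)] by auto

lemma distributed_first_contact_time:
  "distributed P lborel (first_contact_time n) (exponential_density (real (n + 1) * lam))"
proof -
  let ?C = "(\<lambda>j. (0::nat, j, 0::nat)) ` {1..n+1}"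
  have eq: "(\<lambda>w. Min ((\<lambda>c. w c) ` ?C)) = first_contact_time n"
    by (simp add: fun_eq_iff first_contact_time_def image_image)
  have card: "card ?C = n + 1"
    by (subst card_image) (auto simp: inj_on_def)
  have "distributed P lborel (\<lambda>w. Min ((\<lambda>c. w c) ` ?C)) (exponential_density (real (card ?C) * lam))"
    by (rule distributed_Min_coordinates) auto
  then show ?thesis
    unfolding eq card .
qed

lemma integrable_first_contact_time: "integrable P (first_contact_time n)"
  and expectation_first_contact_time: "P.expectation (first_contact_time n) = 1 / (real (n + 1) * lam)"
  using exponential_moment[OF distributed_first_contact_time, where i = 1] lam_pos by auto

lemma integrable_coordinate: "integrable P (\<lambda>w. w c)"
  using exponential_moment(1)[OF distributed_coordinate lam_pos, of c 1] by simp

lemma integrable_coordinate_squared: "integrable P (\<lambda>w. (w c)\<^sup>2)"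
  and expectation_coordinate_squared: "P.expectation (\<lambda>w. (w c)\<^sup>2) = 2 / lam\<^sup>2"
  using exponential_moment[OF distributed_coordinate lam_pos, of c 2] by auto

lemma integrable_min_coordinates: "c \<noteq> c' \<Longrightarrow> integrable P (\<lambda>w. min (w c) (w c'))"
  and expectation_min_coordinates: "c \<noteq> c' \<Longrightarrow> P.expectation (\<lambda>w. min (w c) (w c')) = 1 / (2 * lam)"
proof -
  assume "c \<noteq> c'"
  then have "distributed P lborel (\<lambda>w. Min ((\<lambda>c. w c) ` {c, c'})) (exponential_density (2 * lam))"
    using distributed_Min_coordinates[of "{c, c'}"] by simp
  then have "distributed P lborel (\<lambda>w. min (w c) (w c')) (exponential_density (2 * lam))"
    by simp
  from exponential_moment[OF this, of 1] lam_pos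
  show "integrable P (\<lambda>w. min (w c) (w c'))" "P.expectation (\<lambda>w. min (w c) (w c')) = 1 / (2 * lam)"
    by auto
qed

lemma prob_coordinate_le: "0 \<le> e \<Longrightarrow> P.prob {w. w c \<le> e} \<le> e * lam"
  using P.exponential_distributedD_le[OF distributed_coordinate _ lam_pos, of e c]
    exp_ge_add_one_self[of "- e * lam"] by simp

lemma AE_coordinate_nonneg: "AE w in P. \<forall>c. 0 \<le> w c"
proof (subst AE_all_countable, intro allI)
  fix c
  have "AE x in exp_law. 0 \<le> x"
    by (subst AE_density) (auto simp: exponential_density_def intro!: AE_I2)
  then show "AE w in P. 0 \<le> w c"
    using AE_PiM_component[of UNIV "\<lambda>_. exp_law" c "\<lambda>x. 0 \<le> x"] prob_space_exp_law
    unfolding meeting_space_eq by simp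
qed

lemma AE_coordinates_neq:
  assumes "c \<noteq> c'"
  shows "AE w in P. w c \<noteq> w c'"
proof -
  have eq_set: "{w \<in> space P. w c = w c'} \<in> sets P"
    by measurable
  have "(\<lambda>(x, w). indicator {w c'} x :: ennreal)
      = indicator {y \<in> space (borel \<Otimes>\<^sub>M PiM UNIV (\<lambda>_. borel)). fst y = snd y c'}"
    by (auto simp: fun_eq_iff space_pair_measure space_PiM split: split_indicator)
  also have "\<dots> \<in> borel_measurable (exp_law \<Otimes>\<^sub>M P)"
    unfolding measurable_exp_law_P_eq by (intro borel_measurable_indicator measurable_equality_set) measurable
  finally have indicator_measurable:
    "(\<lambda>(x, w). indicator {w c'} x :: ennreal) \<in> borel_measurable (exp_law \<Otimes>\<^sub>M P)" .
  have "emeasure P {w \<in> space P. w c = w c'} = (\<integral>\<^sup>+w. indicator {w c'} (w c) \<partial>P)"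
    by (subst nn_integral_indicator[OF eq_set, symmetric])
       (auto intro!: nn_integral_cong split: split_indicator)
  also have "\<dots> = (\<integral>\<^sup>+w. emeasure exp_law {w c'} \<partial>P)"
    using assms by (subst nn_integral_resample[OF indicator_measurable]) auto
  also have "\<dots> = 0"
    by (simp add: emeasure_density AE_lborel_singleton nn_integral_0_iff_AE indicator_eq_0_iff)
  finally have "emeasure P {w \<in> space P. w c = w c'} = 0" .
  then show ?thesis
    by (subst AE_iff_measurable[OF eq_set]) auto
qed

lemma AE_regular_meetings: "AE w in P. regular_meetings n w"
proof -
  have "AE w in P. \<forall>j\<in>{2..n+1}. w (0, j, 0) \<noteq> w (0, 1, 0)"
    by (subst AE_finite_all) (auto intro!: AE_coordinates_neq)
  with AE_coordinate_nonneg show ?thesis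
    unfolding regular_meetings_def by eventually_elim auto
qed

lemma measurable_first_contact [measurable]:
  "(\<lambda>w. first_contact n w) \<in> measurable P (count_space UNIV)"
  unfolding first_contact_eq_arg_min_on by (rule measurable_arg_min_on) auto

lemma borel_measurable_first_after [measurable]:
  "t \<in> borel_measurable P \<Longrightarrow> (\<lambda>w. first_after a b (t w) w) \<in> borel_measurable P"
  unfolding first_after_def by (rule borel_measurable_Inf_after) (auto simp: meet_def[abs_def])

lemma borel_measurable_T_FM [measurable]: "T_FM n \<in> borel_measurable P"
proof -
  define F where "F j w = (if j = 1 then w (0, j, 0) else
    min (first_after 0 1 (w (0, j, 0)) w) (first_after j 1 (w (0, j, 0)) w))" for j w
  have "T_FM n = (\<lambda>w. F (first_contact n w) w)"
    by (simp add: fun_eq_iff T_FM_def F_def Let_def)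
  also have "\<dots> \<in> borel_measurable P"
    by (rule measurable_compose_countable'[OF _ measurable_first_contact]) (auto simp: F_def)
  finally show ?thesis .
qed

lemma measurable_diagonal: "(\<lambda>w. (w c, w)) \<in> measurable P (exp_law \<Otimes>\<^sub>M P)"
  unfolding meeting_space_eq
  by (intro measurable_Pair measurable_component_singleton measurable_ident_sets) auto

lemma borel_measurable_relay_term:
  assumes "(\<lambda>(x, w). g w x) \<in> borel_measurable (exp_law \<Otimes>\<^sub>M P)"
  shows "relay_term n g \<in> borel_measurable P"
proof -
  have [measurable]: "(\<lambda>w. g w (w c)) \<in> borel_measurable P" for c
    using measurable_compose[OF measurable_diagonal assms] by simp
  show ?thesis
    unfolding relay_term_eq_sum[abs_def] by measurable
qed

text \<open>The relay \<open>j\<close> is chosen by the meetings of S only, so its meeting time with D can be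
  exchanged for the coordinate \<open>(1, 0, 0)\<close>, which is no meeting time at all.\<close>

lemma integral_relay_term:
  fixes g :: "meetings \<Rightarrow> real \<Rightarrow> real"
  assumes g_meas: "(\<lambda>(x, w). g w x) \<in> borel_measurable (exp_law \<Otimes>\<^sub>M P)"
    and g_nonneg: "\<And>w x. 0 \<le> g w x"
    and g_indep: "\<And>w x c y. fst c = 1 \<Longrightarrow> g (w(c := y)) x = g w x"
  shows "P.expectation (relay_term n g)
    = P.expectation (\<lambda>w. if first_contact n w = 1 then 0 else g w (w (1, 0, 0)))"
proof -
  define h where "h j w x = ennreal (if first_contact n w = j then g w x else 0)" for j w x
  note g_meas' [measurable] = g_meas[unfolded split_beta']
  have h_meas: "(\<lambda>(x, w). h j w x) \<in> borel_measurable (exp_law \<Otimes>\<^sub>M P)" for j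
    unfolding h_def split_beta' by measurable
  have h_diag_meas: "(\<lambda>w. h j w (w c)) \<in> borel_measurable P" for j c
    using measurable_compose[OF measurable_diagonal h_meas] by simp
  have h_indep: "h j (w(c := y)) x = h j w x" if "fst c = 1" for j w x c y
    using that by (simp add: h_def first_contact_fun_upd g_indep)
  have diag_meas [measurable]: "(\<lambda>w. g w (w c)) \<in> borel_measurable P" for c
    using measurable_compose[OF measurable_diagonal g_meas] by simp
  have resample: "(\<integral>\<^sup>+w. h j w (w (1, j, 0)) \<partial>P) = (\<integral>\<^sup>+w. h j w (w (1, 0, 0)) \<partial>P)" for j
    using nn_integral_resample[OF h_meas h_indep, of "(1, j, 0)"]
      nn_integral_resample[OF h_meas h_indep, of "(1, 0, 0)"] by simp
  have "(if first_contact n w = 1 then 0 else g w (w (1, 0, 0)))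
      = (\<Sum>j\<in>{2..n+1}. if first_contact n w = j then g w (w (1, 0, 0)) else 0)" for w
    using relay_term_eq_sum[of n "\<lambda>w _. g w (w (1, 0, 0))" w] by (simp only: relay_term_def Let_def)
  then have swapped_sum: "ennreal (if first_contact n w = 1 then 0 else g w (w (1, 0, 0)))
      = (\<Sum>j\<in>{2..n+1}. h j w (w (1, 0, 0)))" for w
    by (simp add: h_def g_nonneg)
  have relay_sum: "ennreal (relay_term n g w) = (\<Sum>j\<in>{2..n+1}. h j w (w (1, j, 0)))" for w
    unfolding relay_term_eq_sum h_def by (rule sum_ennreal[symmetric]) (simp add: g_nonneg)
  have "P.expectation (relay_term n g) = enn2real (\<integral>\<^sup>+w. ennreal (relay_term n g w) \<partial>P)"
    by (rule integral_eq_nn_integral)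
       (auto intro: borel_measurable_relay_term[OF g_meas] simp: relay_term_def Let_def g_nonneg)
  also have "(\<integral>\<^sup>+w. ennreal (relay_term n g w) \<partial>P) = (\<Sum>j\<in>{2..n+1}. \<integral>\<^sup>+w. h j w (w (1, j, 0)) \<partial>P)"
    by (simp only: relay_sum nn_integral_sum[OF h_diag_meas])
  also have "\<dots> = (\<Sum>j\<in>{2..n+1}. \<integral>\<^sup>+w. h j w (w (1, 0, 0)) \<partial>P)"
    by (rule sum.cong[OF refl resample])
  also have "\<dots> = (\<integral>\<^sup>+w. ennreal (if first_contact n w = 1 then 0 else g w (w (1, 0, 0))) \<partial>P)"
    by (simp only: swapped_sum nn_integral_sum[OF h_diag_meas])
  also have "enn2real \<dots> = P.expectation (\<lambda>w. if first_contact n w = 1 then 0 else g w (w (1, 0, 0)))"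
    by (rule integral_eq_nn_integral[symmetric]) (auto simp: g_nonneg)
  finally show ?thesis .
qed

lemma integrable_relay_term:
  assumes "(\<lambda>(x, w). g w x) \<in> borel_measurable (exp_law \<Otimes>\<^sub>M P)"
    and "integrable P b" and "\<And>w x. \<bar>g w x\<bar> \<le> b w"
  shows "integrable P (relay_term n g)"
proof (rule Bochner_Integration.integrable_bound[OF assms(2) borel_measurable_relay_term[OF assms(1)]])
  have "\<bar>g w x\<bar> \<le> \<bar>b w\<bar>" for w x
    using assms(3)[of w x] by linarith
  then show "AE w in P. norm (relay_term n g w) \<le> norm (b w)"
    by (auto simp: relay_term_def Let_def)
qed

lemma expectation_relay_min:
  "\<bar>P.expectation (relay_term n (\<lambda>w x. max 0 (min (w (0, 1, 0)) x))) - 1 / (2 * lam)\<bar>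
    \<le> 1 / (real (n + 1) * lam)"
proof -
  let ?g = "\<lambda>w x. max 0 (min (w (0, 1, 0)) x)"
  let ?M = "\<lambda>w. min (w (0, 1, 0)) (w (1, 0, 0))"
  let ?R = "\<lambda>w. if first_contact n w = 1 then 0 else ?g w (w (1, 0, 0))"
  have g_meas: "(\<lambda>(x, w). ?g w x) \<in> borel_measurable (exp_law \<Otimes>\<^sub>M P)"
    unfolding measurable_exp_law_P_eq split_beta' by measurable
  have R_eq: "P.expectation (relay_term n ?g) = P.expectation ?R"
    by (rule integral_relay_term[OF g_meas]) (auto split: prod.splits)
  have int_M: "integrable P ?M" and E_M: "P.expectation ?M = 1 / (2 * lam)"
    by (auto intro: integrable_min_coordinates expectation_min_coordinates)
  have int_R: "integrable P ?R"
    by (rule Bochner_Integration.integrable_bound[OF int_M]) (use AE_coordinate_nonneg in auto)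
  have "AE w in P. ?M w - first_contact_time n w \<le> ?R w \<and> ?R w \<le> ?M w"
    using AE_regular_meetings[of n]
  proof eventually_elim
    case (elim w)
    then show ?case
      using T_FM_direct[of n w] regular_meetings_nonneg first_contact_time_nonneg by fastforce
  qed
  then have "P.expectation ?M - P.expectation (first_contact_time n) \<le> P.expectation ?R"
    and "P.expectation ?R \<le> P.expectation ?M"
    using int_M int_R integrable_first_contact_time
    by (auto intro!: integral_mono_AE simp flip: Bochner_Integration.integral_diff elim: AE_mp)
  then show ?thesis
    using R_eq E_M expectation_first_contact_time[of n] by linarith
qed

lemma expectation_relay_indicator:
  assumes "0 \<le> e"
  shows "P.expectation (relay_term n (\<lambda>_. indicator {..e})) \<le> e * lam"
proof -
  let ?R = "\<lambda>w. if first_contact n w = 1 then 0 else indicator {..e} (w (1, 0, 0)) :: real"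
  have "(\<lambda>(x, w). indicator {..e} x :: real) \<in> borel_measurable (exp_law \<Otimes>\<^sub>M P)"
    unfolding measurable_exp_law_P_eq split_beta' by measurable
  then have "P.expectation (relay_term n (\<lambda>_. indicator {..e})) = P.expectation ?R"
    by (rule integral_relay_term) auto
  also have "\<dots> \<le> P.expectation (indicator {w. w (1, 0, 0) \<le> e})"
  proof (rule integral_mono)
    have "{w \<in> space P. w (1, 0, 0) \<le> e} \<in> sets P"
      by measurable
    then show int_ind: "integrable P (indicator {w. w (1, 0, 0) \<le> e} :: _ \<Rightarrow> real)"
      by (simp add: P.emeasure_eq_measure)
    show "?R w \<le> indicator {w. w (1, 0, 0) \<le> e} w" for w
      by (auto split: split_indicator)
    then show "integrable P ?R"
      by (intro Bochner_Integration.integrable_bound[OF int_ind]) auto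
  qed
  also have "\<dots> \<le> e * lam"
    using prob_coordinate_le[OF assms] by simp
  finally show ?thesis .
qed

lemma integrable_T_FM: "integrable P (T_FM n)"
proof (rule Bochner_Integration.integrable_bound[of _ "\<lambda>w. w (0, 1, 0) + \<bar>Inf {}\<bar>"])
  show "AE w in P. norm (T_FM n w) \<le> norm (w (0, 1, 0) + \<bar>Inf {}\<bar>)"
    using AE_regular_meetings[of n]
  proof eventually_elim
    case (elim w)
    then show ?case
      using T_FM_bounds[OF elim] regular_meetings_nonneg[OF elim, of "(0, 1, 0)"] by auto
  qed
qed (use integrable_coordinate in auto)

lemma abs_expectation_T_FM_minus_relay_term_le:
  assumes K: "0 < K" and e: "0 < e"
  shows "\<bar>P.expectation (T_FM n) - P.expectation (relay_term n (\<lambda>w x. max 0 (min (w (0, 1, 0)) x)))\<bar>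
    \<le> 1 / (real (n + 1) * lam) + 2 / (lam\<^sup>2 * K)
       + (K + \<bar>Inf {}\<bar>) * (e * lam + 1 / (real (n + 1) * lam * e))"
proof -
  define R where "R = relay_term n (\<lambda>w x. max 0 (min (w (0, 1, 0)) x))"
  define I where "I = relay_term n (\<lambda>_. indicator {..e} :: real \<Rightarrow> real)"
  define X where "X = first_contact_time n"
  define Err where "Err w = X w + (w (0, 1, 0))\<^sup>2 / K + (K + \<bar>Inf {}\<bar>) * (I w + X w / e)" for w
  have int_R: "integrable P R"
    unfolding R_def
    by (rule integrable_relay_term[where b = "\<lambda>w. \<bar>w (0, 1, 0)\<bar>"])
       (auto simp: measurable_exp_law_P_eq split_beta' intro: integrable_abs integrable_coordinate)
  have int_I: "integrable P I"
    unfolding I_def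
    by (rule integrable_relay_term[where b = "\<lambda>_. 1"])
       (auto simp: measurable_exp_law_P_eq split_beta' split: split_indicator)
  have int_X: "integrable P X"
    unfolding X_def by (rule integrable_first_contact_time)
  have int_Err: "integrable P Err"
    unfolding Err_def using int_X int_I integrable_coordinate_squared by auto
  have close: "AE w in P. \<bar>T_FM n w - R w\<bar> \<le> Err w"
    using AE_regular_meetings[of n]
    unfolding R_def Err_def I_def X_def
    by eventually_elim (rule abs_T_FM_minus_relay_term_le[OF _ K e])
  have "\<bar>P.expectation (T_FM n) - P.expectation R\<bar> = \<bar>P.expectation (\<lambda>w. T_FM n w - R w)\<bar>"
    using integrable_T_FM int_R by simp
  also have "\<dots> \<le> P.expectation (\<lambda>w. \<bar>T_FM n w - R w\<bar>)"
    by (rule integral_abs_bound)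
  also have "\<dots> \<le> P.expectation Err"
    using close integrable_T_FM int_R int_Err by (intro integral_mono_AE) auto
  also have "\<dots> = P.expectation X + 2 / (lam\<^sup>2 * K) + (K + \<bar>Inf {}\<bar>) * (P.expectation I + P.expectation X / e)"
    unfolding Err_def using int_X int_I integrable_coordinate_squared
    by (simp add: expectation_coordinate_squared)
  also have "\<dots> \<le> 1 / (real (n + 1) * lam) + 2 / (lam\<^sup>2 * K)
      + (K + \<bar>Inf {}\<bar>) * (e * lam + 1 / (real (n + 1) * lam * e))"
    using expectation_relay_indicator[of e n] e K
    by (auto simp: X_def I_def expectation_first_contact_time intro!: mult_left_mono)
  finally show ?thesis
    unfolding R_def .
qed

lemma abs_expectation_T_FM_minus_le:
  assumes "0 < K" and "0 < e"
  shows "\<bar>P.expectation (T_FM n) - 1 / (2 * lam)\<bar>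
    \<le> 2 / (real (n + 1) * lam) + 2 / (lam\<^sup>2 * K)
       + (K + \<bar>Inf {}\<bar>) * (e * lam + 1 / (real (n + 1) * lam * e))"
  using abs_expectation_T_FM_minus_relay_term_le[OF assms, of n] expectation_relay_min[of n]
  by linarith

end

theorem proposition1:
  fixes lam :: real
  assumes "lam > 0"
  shows "(\<lambda>n. integral\<^sup>L (meeting_space lam) (T_FM n)) \<sim>[at_top] (\<lambda>n. 1 / (2 * lam))"
proof -
  interpret exponential_meetings lam
    by unfold_locales (rule assms)
  define err where "err n = 2 / (real (n + 1) * lam) + 2 / (lam\<^sup>2 * real n powr (1/4))
      + (real n powr (1/4) + \<bar>Inf {}\<bar>) * (real n powr (-1/2) * lam + 1 / (real (n + 1) * lam * real n powr (-1/2)))"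
    for n :: nat
  have "\<forall>\<^sub>F n in at_top. norm (P.expectation (T_FM n) - 1 / (2 * lam)) \<le> err n"
    using eventually_gt_at_top[of "0::nat"]
    unfolding err_def real_norm_def
    by eventually_elim (rule abs_expectation_T_FM_minus_le; simp)
  moreover have "(err \<longlongrightarrow> 0) at_top"
    unfolding err_def[abs_def] using assms by real_asymp
  ultimately have "((\<lambda>n. P.expectation (T_FM n) - 1 / (2 * lam)) \<longlongrightarrow> 0) at_top"
    by (rule Lim_null_comparison)
  then have "((\<lambda>n. P.expectation (T_FM n)) \<longlongrightarrow> 1 / (2 * lam)) at_top"
    by (rule LIM_zero_cancel)
  then show ?thesis
    by (rule tendsto_imp_asymp_equiv_const) (use assms in simp)
qed

end
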